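(* For the modified EnvZ/OmpR network described in the context and any positive rate constants $k_1,\dots,k_{16}$, at every positive steady state \[[\mathrm{OmpR\text{-}P}]<\frac{k_1}{k_2}\cdot\frac{k_3k_5}{k_4+k_5}\cdot\frac{k_{14}+k_{15}}{k_{13}k_{15}}\quad\text{and}\quad[\mathrm{OmpR\text{-}P}]<k_5\,\frac{k_{11}+k_{12}}{k_{10}k_{12}}.\]
   Context: The modified EnvZ/OmpR network has mass-action kinetics and reactions $\mathrm{EnvZ\text{-}ADP}\underset{k_2}{\overset{k_1}{\rightleftharpoons}}\mathrm{EnvZ}\underset{k_4}{\overset{k_3}{\rightleftharpoons}}\mathrm{EnvZ\text{-}ATP}\xrightarrow{k_5}\mathrm{EnvZ\text{-}P}$; $\mathrm{EnvZ\text{-}P}+\mathrm{OmpR}\underset{k_7}{\overset{k_6}{\rightleftharpoons}}\mathrm{EnvZ\text{-}P\text{-}OmpR}\underset{k_9}{\overset{k_8}{\rightleftharpoons}}\mathrm{EnvZ}+\mathrm{OmpR\text{-}P}$; $\mathrm{EnvZ\text{-}ATP}+\mathrm{OmpR\text{-}P}\underset{k_{11}}{\overset{k_{10}}{\rightleftharpoons}}\mathrm{EnvZ\text{-}ATP\text{-}OmpR\text{-}P}\xrightarrow{k_{12}}\mathrm{EnvZ\text{-}ATP}+\mathrm{OmpR}$; $\mathrm{EnvZ\text{-}ADP}+\mathrm{OmpR\text{-}P}\underset{k_{14}}{\overset{k_{13}}{\rightleftharpoons}}\mathrm{EnvZ\text{-}ADP\text{-}OmpR\text{-}P}\xrightarrow{k_{15}}\mathrm{EnvZ\text{-}ADP}+\mathrm{OmpR}$;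 $\mathrm{OmpR\text{-}P}\xrightarrow{k_{16}}\mathrm{OmpR}$ (here $A\underset{k'}{\overset{k}{\rightleftharpoons}}B$ means $A\xrightarrow{k}B$ and $B\xrightarrow{k'}A$; hyphenated names are single species). Square brackets denote concentrations; a positive steady state is a vector of positive concentrations of all nine species at which all mass-action rates of change vanish. *)

theory Defs
  imports Complex_Main
begin

text \<open>Species concentrations (in this order):
  xD = [EnvZ-ADP], xE = [EnvZ], xT = [EnvZ-ATP], xP = [EnvZ-P], xO = [OmpR],
  xC1 = [EnvZ-P-OmpR], xOp = [OmpR-P], xC2 = [EnvZ-ATP-OmpR-P], xC3 = [EnvZ-ADP-OmpR-P].\<close>

definition envz_steady ::
  "(nat \<Rightarrow> real) \<Rightarrow> real \<Rightarrow> real \<Rightarrow> real \<Rightarrow> real \<Rightarrow> real \<Rightarrow> real \<Rightarrow> real \<Rightarrow> real \<Rightarrow> real \<Rightarrow> bool"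
where
  "envz_steady k xD xE xT xP xO xC1 xOp xC2 xC3 \<longleftrightarrow>
     (- k 1 * xD + k 2 * xE - k 13 * xD * xOp + k 14 * xC3 + k 15 * xC3 = 0) \<and>
     (k 1 * xD - k 2 * xE - k 3 * xE + k 4 * xT + k 8 * xC1 - k 9 * xE * xOp = 0) \<and>
     (k 3 * xE - k 4 * xT - k 5 * xT - k 10 * xT * xOp + k 11 * xC2 + k 12 * xC2 = 0) \<and>
     (k 5 * xT - k 6 * xP * xO + k 7 * xC1 = 0) \<and>
     (- k 6 * xP * xO + k 7 * xC1 + k 12 * xC2 + k 15 * xC3 + k 16 * xOp = 0) \<and>
     (k 6 * xP * xO - k 7 * xC1 - k 8 * xC1 + k 9 * xE * xOp = 0) \<and>
     (k 8 * xC1 - k 9 * xE * xOp - k 10 * xT * xOp + k 11 * xC2 - k 13 * xD * xOp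
        + k 14 * xC3 - k 16 * xOp = 0) \<and>
     (k 10 * xT * xOp - k 11 * xC2 - k 12 * xC2 = 0) \<and>
     (k 13 * xD * xOp - k 14 * xC3 - k 15 * xC3 = 0)"

end

theory Submission
  imports Defs
begin

(* Both bounds come from the phosphate flux balance of the network.  At a steady state
   the two intermediate complexes EnvZ-ATP-OmpR-P and EnvZ-ADP-OmpR-P are in quasi-
   equilibrium with their binding partners, EnvZ-ADP, EnvZ and EnvZ-ATP are related by
   detailed balance, and the total phosphorylation flux k5 [EnvZ-ATP] equals the sum of
   the three dephosphorylation fluxes k12 [C2] + k15 [C3] + k16 [OmpR-P].  Since all
   three are positive, each of the first two is strictly below k5 [EnvZ-ATP]. *)

lemma steady_state_relations:
  assumes "envz_steady k xD xE xT xP xO xC1 xOp xC2 xC3"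
  shows "(k 11 + k 12) * xC2 = k 10 * xT * xOp"
    and "(k 14 + k 15) * xC3 = k 13 * xD * xOp"
    and "k 2 * (k 4 + k 5) * xT = k 1 * k 3 * xD"
    and "k 5 * xT = k 12 * xC2 + k 15 * xC3 + k 16 * xOp"
proof -
  note st = assms[unfolded envz_steady_def]
  show C2: "(k 11 + k 12) * xC2 = k 10 * xT * xOp"
    and C3: "(k 14 + k 15) * xC3 = k 13 * xD * xOp"
    using st by (simp_all add: algebra_simps)
  have DE: "k 1 * xD = k 2 * xE" using st C3 by (simp add: algebra_simps)
  have ET: "k 3 * xE = (k 4 + k 5) * xT" using st C2 by (simp add: algebra_simps)
  have "k 2 * (k 4 + k 5) * xT = k 2 * (k 3 * xE)" by (simp add: ET)
  also have "\<dots> = k 1 * k 3 * xD" by (simp add: DE[symmetric])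
  finally show "k 2 * (k 4 + k 5) * xT = k 1 * k 3 * xD" .
  show "k 5 * xT = k 12 * xC2 + k 15 * xC3 + k 16 * xOp" using st by linarith
qed

lemma complex_flux_bound:
  fixes a b c v X Y C :: real
  assumes "a + b > 0" "b > 0" "c > 0" "X > 0"
    and equilibrium: "(a + b) * C = c * X * Y"
    and turnover: "b * C < v * X"
  shows "Y < v * ((a + b) / (c * b))"
proof -
  have "X * (c * b * Y) = b * ((a + b) * C)" using equilibrium by (simp add: algebra_simps)
  also have "\<dots> < (a + b) * (v * X)"
    using mult_strict_left_mono[OF turnover \<open>a + b > 0\<close>] by (simp add: algebra_simps)
  also have "\<dots> = X * (v * (a + b))" by (simp add: algebra_simps)
  finally have "c * b * Y < v * (a + b)" using \<open>X > 0\<close> by simp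
  then show ?thesis using assms(2,3) by (simp add: field_simps)
qed

theorem mainTheorem9:
  fixes k :: "nat \<Rightarrow> real"
    and xD xE xT xP xO xC1 xOp xC2 xC3 :: real
  assumes "\<forall>i\<in>{1..16}. k i > 0"
    and "xD > 0" "xE > 0" "xT > 0" "xP > 0" "xO > 0"
    and "xC1 > 0" "xOp > 0" "xC2 > 0" "xC3 > 0"
    and "envz_steady k xD xE xT xP xO xC1 xOp xC2 xC3"
  shows "xOp < (k 1 / k 2) * (k 3 * k 5 / (k 4 + k 5)) * ((k 14 + k 15) / (k 13 * k 15))
       \<and> xOp < k 5 * ((k 11 + k 12) / (k 10 * k 12))"
proof -
  have pos: "k i > 0" if "1 \<le> i" "i \<le> 16" for i using assms(1) that by auto
  have k2: "k 2 > 0" and k4: "k 4 > 0" and k5: "k 5 > 0" and k10: "k 10 > 0" and k11: "k 11 > 0" and k12: "k 12 > 0"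
    and k13: "k 13 > 0" and k14: "k 14 > 0" and k15: "k 15 > 0" and k16: "k 16 > 0"
    by (simp_all add: pos)
  note rel = steady_state_relations[OF assms(11)]
  have "k 12 * xC2 > 0" "k 15 * xC3 > 0" "k 16 * xOp > 0"
    using k12 k15 k16 assms(8-10) by simp_all
  then have turnover_ATP: "k 12 * xC2 < k 5 * xT" and turnover_ADP: "k 15 * xC3 < k 5 * xT"
    using rel(4) by linarith+
  have ATP_bound: "xOp < k 5 * ((k 11 + k 12) / (k 10 * k 12))"
    using complex_flux_bound[OF _ k12 k10 \<open>xT > 0\<close> rel(1) turnover_ATP] k11 k12 by simp
  define v where "v = k 1 * k 3 * k 5 / (k 2 * (k 4 + k 5))"
  have "v * xD = k 5 * xT"
  proof -
    have "v * xD = k 5 * (k 1 * k 3 * xD) / (k 2 * (k 4 + k 5))" by (simp add: v_def)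
    also have "\<dots> = k 5 * (k 2 * (k 4 + k 5) * xT) / (k 2 * (k 4 + k 5))"
      by (simp only: rel(3))
    also have "\<dots> = k 5 * xT" using k2 k4 k5 by simp
    finally show ?thesis .
  qed
  then have "xOp < v * ((k 14 + k 15) / (k 13 * k 15))"
    using complex_flux_bound[OF _ k15 k13 \<open>xD > 0\<close> rel(2)] turnover_ADP k14 k15 by simp
  then have ADP_bound:
    "xOp < (k 1 / k 2) * (k 3 * k 5 / (k 4 + k 5)) * ((k 14 + k 15) / (k 13 * k 15))"
    by (simp add: v_def)
  show ?thesis using ADP_bound ATP_bound ..
qed

end
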